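(* The $3$-form $\varphi=e^{127}+e^{347}+e^{567}+e^{135}-e^{146}-e^{236}-e^{245}$ on the Lie algebra $\mathfrak{g}$ described in the context is coclosed ($d\ast\varphi=0$) if and only if $\operatorname{tr}(A)=0$ and $\theta(A)\omega_7+\theta(B)\omega_1+\theta(C)\omega_2=\operatorname{tr}(A_1)\,\omega_7$.
   Context: $\mathfrak{g}$ is a $7$-dimensional Lie algebra with basis $\{e_1,\dots,e_7\}$, dual basis $\{e^i\}$, $e^{ij\dots}=e^i\wedge e^j\wedge\cdots$, bracket given by $A_1=\operatorname{ad}e_7|_{\operatorname{span}\{e_1,e_2\}}=\begin{pmatrix}x&z\\ y&w\end{pmatrix}$, $A=\operatorname{ad}e_7|_{\mathfrak{g}_1}$, $B=\operatorname{ad}e_1|_{\mathfrak{g}_1}$, $C=\operatorname{ad}e_2|_{\mathfrak{g}_1}$, with $\mathfrak{g}_1=\operatorname{span}\{e_3,\dots,e_6\}$ an abelian ideal, $\operatorname{span}\{e_1,e_2\}$ abelian, $\operatorname{span}\{e_7,e_1,e_2\}$ a subalgebra, $\operatorname{tr}B=\operatorname{tr}C=0$, $[A,B]=xB+yC$, $[A,C]=zB+wC$, $[B,C]=0$. $\ast$ is the Hodge star of the metric and orientation induced by $\varphi$ (making $\{e_i\}$ oriented orthonormal). $\omega_7=e^{34}+e^{56}$, $\omega_1=e^{35}-e^{46}$, $\omega_2=-e^{36}-e^{45}$; for $M\in\mathfrak{gl}(\mathfrak{g}_1)$, $\theta(M)\alpha(v_1,\dots,v_k)=-\alpha(Mv_1,\dots,v_k)-\dots-\alpha(v_1,\dots,Mv_k)$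 on $\Lambda^k\mathfrak{g}_1^*$. *)

theory Defs
  imports Complex_Main
begin

text \<open>The Lie algebra g has basis e_1..e_7 (indices 1..7 as naturals).
A k-form is represented by its values on tuples of basis vectors:
a function alpha :: nat list => real, alpha [i1,...,ik] = alpha(e_i1,...,e_ik),
extended multilinearly. Endomorphisms of g1 = span{e_3..e_6} are matrices
M :: nat => nat => real with indices in {3..6}, M e_j = sum_i M i j e_i.\<close>

definition inv_count :: "nat list \<Rightarrow> nat" where
  "inv_count l = card {(i, j). i < j \<and> j < length l \<and> l ! j < l ! i}"

definition levi_civita :: "nat list \<Rightarrow> real" where
  "levi_civita l = (if distinct l \<and> set l = {1..7} then (-1) ^ inv_count l else 0)"

text \<open>Basic form e^{I} = e^{i1} wedge ... wedge e^{ik}, evaluated on basis tuples.\<close>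
definition eform :: "nat list \<Rightarrow> nat list \<Rightarrow> real" where
  "eform I J = (if distinct I \<and> distinct J \<and> set J = set I
                then (-1) ^ (inv_count I + inv_count J) else 0)"

text \<open>Hodge star for the metric making e_1..e_7 oriented orthonormal:
 (*alpha)_J = 1/k! sum_I alpha_I eps_{I J}.\<close>
definition hodge :: "(nat list \<Rightarrow> real) \<Rightarrow> nat list \<Rightarrow> real" where
  "hodge \<alpha> J =
     (\<Sum>I\<in>{I. set I \<subseteq> {1..7} \<and> length I = 7 - length J}. \<alpha> I * levi_civita (I @ J))
       / fact (7 - length J)"

text \<open>Chevalley-Eilenberg differential, c i j k = coefficient of e_k in [e_i,e_j]:
 d alpha(X_0..X_k) = sum_{i<j} (-1)^(i+j) alpha([X_i,X_j], X_0,..^i..^j..,X_k).\<close>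
definition ext_d :: "(nat \<Rightarrow> nat \<Rightarrow> nat \<Rightarrow> real) \<Rightarrow> (nat list \<Rightarrow> real) \<Rightarrow> nat list \<Rightarrow> real" where
  "ext_d c \<alpha> l = (\<Sum>j<length l. \<Sum>i<j. (-1) ^ (i + j) *
      (\<Sum>m\<in>{1..7}. c (l ! i) (l ! j) m * \<alpha> (m # nths l (- {i, j}))))"

text \<open>Half of the brackets: ad e_7 on span{e_1,e_2} is A1 = [[x,z],[y,w]],
 ad e_7, ad e_1, ad e_2 on g1 are A, B, C; all other brackets of basis vectors
 (up to antisymmetry) vanish.\<close>
definition half_br ::
  "real \<Rightarrow> real \<Rightarrow> real \<Rightarrow> real \<Rightarrow> (nat \<Rightarrow> nat \<Rightarrow> real) \<Rightarrow> (nat \<Rightarrow> nat \<Rightarrow> real) \<Rightarrow>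
   (nat \<Rightarrow> nat \<Rightarrow> real) \<Rightarrow> nat \<Rightarrow> nat \<Rightarrow> nat \<Rightarrow> real" where
  "half_br x y z w A B C i j k =
    (if i = 7 \<and> j = 1 then (if k = 1 then x else if k = 2 then y else 0)
     else if i = 7 \<and> j = 2 then (if k = 1 then z else if k = 2 then w else 0)
     else if j \<in> {3..6} \<and> k \<in> {3..6} then
       (if i = 7 then A k j else if i = 1 then B k j else if i = 2 then C k j else 0)
     else 0)"

definition g_bracket ::
  "real \<Rightarrow> real \<Rightarrow> real \<Rightarrow> real \<Rightarrow> (nat \<Rightarrow> nat \<Rightarrow> real) \<Rightarrow> (nat \<Rightarrow> nat \<Rightarrow> real) \<Rightarrow>
   (nat \<Rightarrow> nat \<Rightarrow> real) \<Rightarrow> nat \<Rightarrow> nat \<Rightarrow> nat \<Rightarrow> real" where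
  "g_bracket x y z w A B C i j k = half_br x y z w A B C i j k - half_br x y z w A B C j i k"

definition mtrace :: "(nat \<Rightarrow> nat \<Rightarrow> real) \<Rightarrow> real" where
  "mtrace M = (\<Sum>i\<in>{3..6}. M i i)"

definition mmul :: "(nat \<Rightarrow> nat \<Rightarrow> real) \<Rightarrow> (nat \<Rightarrow> nat \<Rightarrow> real) \<Rightarrow> nat \<Rightarrow> nat \<Rightarrow> real" where
  "mmul M N i j = (\<Sum>k\<in>{3..6}. M i k * N k j)"

definition mcomm :: "(nat \<Rightarrow> nat \<Rightarrow> real) \<Rightarrow> (nat \<Rightarrow> nat \<Rightarrow> real) \<Rightarrow> nat \<Rightarrow> nat \<Rightarrow> real" where
  "mcomm M N i j = mmul M N i j - mmul N M i j"

definition theta :: "(nat \<Rightarrow> nat \<Rightarrow> real) \<Rightarrow> (nat list \<Rightarrow> real) \<Rightarrow> nat list \<Rightarrow> real" where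
  "theta M \<alpha> l = - (\<Sum>p<length l. \<Sum>i\<in>{3..6}. M i (l ! p) * \<alpha> (l[p := i]))"

definition phi :: "nat list \<Rightarrow> real" where
  "phi J = eform [1,2,7] J + eform [3,4,7] J + eform [5,6,7] J + eform [1,3,5] J
         - eform [1,4,6] J - eform [2,3,6] J - eform [2,4,5] J"

definition omega7 :: "nat list \<Rightarrow> real" where
  "omega7 J = eform [3,4] J + eform [5,6] J"

definition omega1 :: "nat list \<Rightarrow> real" where
  "omega1 J = eform [3,5] J - eform [4,6] J"

definition omega2 :: "nat list \<Rightarrow> real" where
  "omega2 J = - eform [3,6] J - eform [4,5] J"

end

theory Submission
  imports Defs "HOL-Combinatorics.Multiset_Permutations"
begin

text \<open>Both sides of the equivalence are conditions on alternating forms, so they need only be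
checked on strictly increasing index lists: an adjacent transposition of the arguments changes the
sign, and a repeated index kills the value. The Hodge dual of a basic form is a Levi-Civita symbol,
which makes the 21 increasing components of \<open>d\<ast>\<phi>\<close> explicit: on \<open>[1,3,4,5,6]\<close>, \<open>[2,3,4,5,6]\<close>,
\<open>[3,4,5,6,7]\<close> they are \<open>-tr B\<close>, \<open>-tr C\<close>, \<open>-tr A\<close>; on \<open>[1,2,a,b,7]\<close> they are the \<open>(a,b)\<close>-component
of \<open>\<theta>(A)\<omega>7 + \<theta>(B)\<omega>1 + \<theta>(C)\<omega>2 - tr(A1)\<omega>7\<close>; all others vanish. As \<open>tr B = tr C = 0\<close>,
this is the claim.\<close>

lemma inv_count_Nil [simp]: "inv_count [] = 0"
  by (simp add: inv_count_def)

lemma inv_count_Cons [simp]: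
  "inv_count (a # l) = length (filter (\<lambda>y. y < a) l) + inv_count l"
proof -
  let ?S = "{(i, j). i < j \<and> j < length (a # l) \<and> (a # l) ! j < (a # l) ! i}"
  let ?S\<^sub>0 = "(\<lambda>j. (0::nat, Suc j)) ` {j. j < length l \<and> l ! j < a}"
  let ?S\<^sub>1 = "(\<lambda>(i, j). (Suc i, Suc j)) ` {(i, j). i < j \<and> j < length l \<and> l ! j < l ! i}"
  have split: "?S = ?S\<^sub>0 \<union> ?S\<^sub>1"
  proof (rule set_eqI, clarify)
    fix i j
    show "(i, j) \<in> ?S \<longleftrightarrow> (i, j) \<in> ?S\<^sub>0 \<union> ?S\<^sub>1"
      by (cases i; cases j) (auto simp: image_iff)
  qed
  have "finite {(i, j). i < j \<and> j < length l \<and> l ! j < l ! i}"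
    by (rule finite_subset[of _ "{..<length l} \<times> {..<length l}"]) auto
  then have "card ?S = card ?S\<^sub>0 + card ?S\<^sub>1"
    unfolding split by (intro card_Un_disjoint) auto
  also have "card ?S\<^sub>0 = length (filter (\<lambda>y. y < a) l)"
    by (subst card_image) (auto simp: inj_on_def length_filter_conv_card)
  also have "card ?S\<^sub>1 = inv_count l"
    unfolding inv_count_def by (rule card_image) (auto simp: inj_on_def)
  finally show ?thesis
    unfolding inv_count_def .
qed

lemma inv_count_append:
  "inv_count (xs @ ys) =
     inv_count xs + inv_count ys + (\<Sum>x\<leftarrow>xs. length (filter (\<lambda>y. y < x) ys))"
  by (induction xs) simp_all

lemma inv_count_swap:
  "a < b \<Longrightarrow> inv_count (xs @ b # a # ys) = Suc (inv_count (xs @ a # b # ys))"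
  by (induction xs) auto

lemma sign_inv_count_swap:
  assumes "a \<noteq> b"
  shows "(-1::real) ^ inv_count (xs @ a # b # ys) = - ((-1) ^ inv_count (xs @ b # a # ys))"
proof (cases "a < b")
  case True
  then show ?thesis by (simp add: inv_count_swap)
next
  case False
  with assms have "b < a" by simp
  then show ?thesis by (simp add: inv_count_swap)
qed

lemma levi_civita_swap: "levi_civita (xs @ a # b # ys) = - levi_civita (xs @ b # a # ys)"
proof (cases "a = b")
  case False
  have "distinct (xs @ a # b # ys) = distinct (xs @ b # a # ys)"
    and "set (xs @ a # b # ys) = set (xs @ b # a # ys)" by auto
  with False show ?thesis
    unfolding levi_civita_def by (simp add: sign_inv_count_swap[OF False])
qed (simp add: levi_civita_def)

lemma eform_swap: "eform I (xs @ a # b # ys) = - eform I (xs @ b # a # ys)"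
proof (cases "a = b")
  case False
  have "distinct (xs @ a # b # ys) = distinct (xs @ b # a # ys)"
    and "set (xs @ a # b # ys) = set (xs @ b # a # ys)" by auto
  with False show ?thesis
    unfolding eform_def by (simp add: sign_inv_count_swap[OF False] power_add)
qed (simp add: eform_def)

lemma levi_civita_altdef:
  "levi_civita l =
     (if distinct l \<and> length l = 7 \<and> set l \<subseteq> {1..7} then (-1) ^ inv_count l else 0)"
proof -
  have "distinct l \<and> set l = {1..7} \<longleftrightarrow> distinct l \<and> length l = 7 \<and> set l \<subseteq> {1..7}"
    using card_subset_eq[of "{1..7::nat}" "set l"] distinct_card[of l] by auto
  then show ?thesis
    unfolding levi_civita_def by presburger
qed

lemma eform_mult_levi_civita_permutation:
  assumes "J \<in> permutations_of_set (set I)" "distinct I"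
  shows "eform I J * levi_civita (J @ L) = levi_civita (I @ L)"
proof -
  have J: "distinct J" "set J = set I"
    using assms(1) by (auto dest: permutations_of_setD)
  have "(\<Sum>x\<leftarrow>J. length (filter (\<lambda>y. y < x) L)) = (\<Sum>x\<leftarrow>I. length (filter (\<lambda>y. y < x) L))"
    using J assms(2) by (simp add: sum_list_distinct_conv_sum_set)
  then have "(-1::real) ^ (inv_count I + inv_count J) * (-1) ^ inv_count (J @ L)
             = (-1) ^ inv_count (I @ L) * ((-1) ^ inv_count J * (-1) ^ inv_count J)"
    by (simp add: inv_count_append power_add)
  also have "\<dots> = (-1) ^ inv_count (I @ L)"
    by (simp flip: power_add)
  finally show ?thesis
    using J assms(2) unfolding eform_def levi_civita_def by auto
qed

lemma hodge_eform:
  assumes I: "distinct I" "set I \<subseteq> {1..7}" and len: "length I + length L = 7"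
  shows "hodge (eform I) L = levi_civita (I @ L)"
proof -
  let ?P = "permutations_of_set (set I)"
  have P: "?P \<subseteq> {J. set J \<subseteq> {1..7} \<and> length J = length I}"
    using I by (auto simp: permutations_of_set_def) (metis distinct_card)
  have "(\<Sum>J | set J \<subseteq> {1..7} \<and> length J = length I. eform I J * levi_civita (J @ L))
        = (\<Sum>J\<in>?P. eform I J * levi_civita (J @ L))"
    by (rule sum.mono_neutral_right[OF _ P])
      (auto simp: finite_lists_length_eq eform_def permutations_of_set_def)
  also have "\<dots> = fact (length I) * levi_civita (I @ L)"
    using I by (simp add: eform_mult_levi_civita_permutation distinct_card)
  moreover have "7 - length L = length I"
    using len by simp
  ultimately show ?thesis
    unfolding hodge_def by simp
qed

lemma hodge_add: "hodge (\<lambda>J. \<alpha> J + \<beta> J) L = hodge \<alpha> L + hodge \<beta> L"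
  by (simp add: hodge_def sum.distrib distrib_right add_divide_distrib)

lemma hodge_diff: "hodge (\<lambda>J. \<alpha> J - \<beta> J) L = hodge \<alpha> L - hodge \<beta> L"
  unfolding hodge_def by (simp add: sum_subtractf left_diff_distrib diff_divide_distrib)

lemma hodge_swap: "hodge \<alpha> (xs @ a # b # ys) = - hodge \<alpha> (xs @ b # a # ys)"
proof -
  have swap: "\<alpha> I * levi_civita (I @ xs @ a # b # ys) = - (\<alpha> I * levi_civita (I @ xs @ b # a # ys))"
    for I using levi_civita_swap[of "I @ xs" a b ys] by simp
  show ?thesis
    unfolding hodge_def by (simp add: swap sum_negf)
qed

lemma hodge_phi:
  assumes "length L = 4"
  shows "hodge phi L =
    levi_civita ([1,2,7] @ L) + levi_civita ([3,4,7] @ L) + levi_civita ([5,6,7] @ L)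
    + levi_civita ([1,3,5] @ L) - levi_civita ([1,4,6] @ L) - levi_civita ([2,3,6] @ L)
    - levi_civita ([2,4,5] @ L)"
  using assms by (simp add: phi_def[abs_def] hodge_add hodge_diff hodge_eform)

definition alternating :: "nat \<Rightarrow> (nat list \<Rightarrow> real) \<Rightarrow> bool" where
  "alternating k f \<longleftrightarrow>
     (\<forall>xs a b ys. length xs + length ys + 2 = k \<longrightarrow> f (xs @ a # b # ys) = - f (xs @ b # a # ys))"

lemma not_sorted_wrt_less_adjacent:
  fixes l :: "'a::linorder list"
  assumes "\<not> sorted_wrt (<) l"
  shows "\<exists>xs a b ys. l = xs @ a # b # ys \<and> b \<le> a"
  using assms
proof (induction l)
  case (Cons x l)
  show ?case
  proof (cases "sorted_wrt (<) l")
    case False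
    with Cons.IH obtain xs a b ys where "l = xs @ a # b # ys" "b \<le> a" by blast
    then show ?thesis by (metis append_Cons)
  next
    case True
    with Cons.prems obtain y zs where "l = y # zs" "y \<le> x"
      by (cases l) (auto simp: sorted_wrt2)
    then show ?thesis by (metis append_Nil)
  qed
qed simp

lemma alternating_vanishes_iff_sorted:
  assumes alt: "alternating k f"
  shows "(\<forall>l. set l \<subseteq> S \<and> length l = k \<longrightarrow> f l = 0) \<longleftrightarrow>
         (\<forall>l. set l \<subseteq> S \<and> length l = k \<and> sorted_wrt (<) l \<longrightarrow> f l = 0)"
proof (intro iffI allI impI)
  assume sorted: "\<forall>l. set l \<subseteq> S \<and> length l = k \<and> sorted_wrt (<) l \<longrightarrow> f l = 0"
  fix l assume "set l \<subseteq> S \<and> length l = k"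
  then show "f l = 0"
  proof (induction "inv_count l" arbitrary: l rule: less_induct)
    case less
    show ?case
    proof (cases "sorted_wrt (<) l")
      case True
      with less.prems sorted show ?thesis by blast
    next
      case False
      then obtain xs a b ys where l: "l = xs @ a # b # ys" and "b \<le> a"
        using not_sorted_wrt_less_adjacent by blast
      have "length xs + length ys + 2 = k"
        using less.prems unfolding l by simp
      with alt have swap: "f l = - f (xs @ b # a # ys)"
        unfolding alternating_def l by blast
      show ?thesis
      proof (cases "a = b")
        case True
        with swap show ?thesis unfolding l by simp
      next
        case False
        with \<open>b \<le> a\<close> have "inv_count (xs @ b # a # ys) < inv_count l"
          unfolding l by (simp add: inv_count_swap)
        moreover have "set (xs @ b # a # ys) \<subseteq> S \<and> length (xs @ b # a # ys) = k"
          using less.prems unfolding l by auto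
        ultimately show ?thesis
          using less.hyps swap by fastforce
      qed
    qed
  qed
qed simp

lemma alternating_2_iff: "alternating 2 f \<longleftrightarrow> (\<forall>a b. f [a, b] = - f [b, a])"
  unfolding alternating_def by auto

lemma alternating_hodge: "alternating k (hodge \<alpha>)"
  unfolding alternating_def by (intro allI impI) (rule hodge_swap)

lemma alternating_omega: "alternating 2 omega7" "alternating 2 omega1" "alternating 2 omega2"
proof -
  have "omega7 [a, b] = - omega7 [b, a] \<and> omega1 [a, b] = - omega1 [b, a]
        \<and> omega2 [a, b] = - omega2 [b, a]" for a b :: nat
  proof -
    have "eform I [b, a] = - eform I [a, b]" for I
      using eform_swap[of I "[]" b a "[]"] by simp
    then show ?thesis
      unfolding omega7_def omega1_def omega2_def by simp
  qed
  then show "alternating 2 omega7" "alternating 2 omega1" "alternating 2 omega2"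
    unfolding alternating_2_iff by blast+
qed

lemma theta_2:
  "theta M \<alpha> [a, b] = - (\<Sum>i\<in>{3..6}. M i a * \<alpha> [i, b]) - (\<Sum>i\<in>{3..6}. M i b * \<alpha> [a, i])"
  by (simp add: theta_def numeral_2_eq_2 lessThan_Suc)

lemma alternating_theta_2:
  assumes "alternating 2 \<alpha>"
  shows "alternating 2 (theta M \<alpha>)"
  unfolding alternating_2_iff
proof (intro allI)
  fix a b :: nat
  from assms have "\<alpha> [b, i] = - \<alpha> [i, b]" "\<alpha> [i, a] = - \<alpha> [a, i]" for i
    unfolding alternating_2_iff by blast+
  then show "theta M \<alpha> [a, b] = - theta M \<alpha> [b, a]"
    unfolding theta_2 by (simp add: sum_negf)
qed

lemma alternating_theta_omega:
  "alternating 2 (\<lambda>l. theta A omega7 l + theta B omega1 l + theta C omega2 l - s * omega7 l)"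
  unfolding alternating_2_iff
proof (intro allI)
  fix a b :: nat
  have "theta A omega7 [a, b] = - theta A omega7 [b, a]"
    and "theta B omega1 [a, b] = - theta B omega1 [b, a]"
    and "theta C omega2 [a, b] = - theta C omega2 [b, a]"
    and "omega7 [a, b] = - omega7 [b, a]"
    using alternating_theta_2[OF alternating_omega(1)] alternating_theta_2[OF alternating_omega(2)]
      alternating_theta_2[OF alternating_omega(3)] alternating_omega(1)
    unfolding alternating_2_iff by blast+
  then show "theta A omega7 [a, b] + theta B omega1 [a, b] + theta C omega2 [a, b] - s * omega7 [a, b]
      = - (theta A omega7 [b, a] + theta B omega1 [b, a] + theta C omega2 [b, a] - s * omega7 [b, a])"
    by simp
qed

lemma ext_d_5:
  "ext_d c \<alpha> [a\<^sub>1, a\<^sub>2, a\<^sub>3, a\<^sub>4, a\<^sub>5] = (\<Sum>m\<in>{1..7}.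
      - c a\<^sub>1 a\<^sub>2 m * \<alpha> [m, a\<^sub>3, a\<^sub>4, a\<^sub>5] + c a\<^sub>1 a\<^sub>3 m * \<alpha> [m, a\<^sub>2, a\<^sub>4, a\<^sub>5]
      - c a\<^sub>1 a\<^sub>4 m * \<alpha> [m, a\<^sub>2, a\<^sub>3, a\<^sub>5] + c a\<^sub>1 a\<^sub>5 m * \<alpha> [m, a\<^sub>2, a\<^sub>3, a\<^sub>4]
      - c a\<^sub>2 a\<^sub>3 m * \<alpha> [m, a\<^sub>1, a\<^sub>4, a\<^sub>5] + c a\<^sub>2 a\<^sub>4 m * \<alpha> [m, a\<^sub>1, a\<^sub>3, a\<^sub>5]
      - c a\<^sub>2 a\<^sub>5 m * \<alpha> [m, a\<^sub>1, a\<^sub>3, a\<^sub>4] - c a\<^sub>3 a\<^sub>4 m * \<alpha> [m, a\<^sub>1, a\<^sub>2, a\<^sub>5]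
      + c a\<^sub>3 a\<^sub>5 m * \<alpha> [m, a\<^sub>1, a\<^sub>2, a\<^sub>4] - c a\<^sub>4 a\<^sub>5 m * \<alpha> [m, a\<^sub>1, a\<^sub>2, a\<^sub>3])"
  unfolding ext_d_def
  by (simp add: eval_nat_numeral sum.distrib sum_subtractf sum_negf nths_Cons algebra_simps)

lemma alternating_ext_d_5:
  assumes c: "\<And>i j m. c j i m = - c i j m" and "alternating 4 \<alpha>"
  shows "alternating 5 (ext_d c \<alpha>)"
proof -
  note swap = \<open>alternating 4 \<alpha>\<close>[unfolded alternating_def, rule_format]
  have \<alpha>\<^sub>1: "\<alpha> [m, p, q, r] = - \<alpha> [m, q, p, r]"
    and \<alpha>\<^sub>2: "\<alpha> [m, p, q, r] = - \<alpha> [m, p, r, q]" for m p q r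
    using swap[of "[m]" "[r]" p q] swap[of "[m, p]" "[]" q r] by simp_all
  have swap\<^sub>1\<^sub>2: "ext_d c \<alpha> [a\<^sub>2, a\<^sub>1, a\<^sub>3, a\<^sub>4, a\<^sub>5] = - ext_d c \<alpha> [a\<^sub>1, a\<^sub>2, a\<^sub>3, a\<^sub>4, a\<^sub>5]"
    for a\<^sub>1 a\<^sub>2 a\<^sub>3 a\<^sub>4 a\<^sub>5
    unfolding ext_d_5 sum_negf[symmetric]
    by (rule sum.cong[OF refl]) (simp add: c[of a\<^sub>1 a\<^sub>2] \<alpha>\<^sub>1[of _ a\<^sub>2 a\<^sub>1])
  have swap\<^sub>2\<^sub>3: "ext_d c \<alpha> [a\<^sub>1, a\<^sub>3, a\<^sub>2, a\<^sub>4, a\<^sub>5] = - ext_d c \<alpha> [a\<^sub>1, a\<^sub>2, a\<^sub>3, a\<^sub>4, a\<^sub>5]"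
    for a\<^sub>1 a\<^sub>2 a\<^sub>3 a\<^sub>4 a\<^sub>5
    unfolding ext_d_5 sum_negf[symmetric]
    by (rule sum.cong[OF refl]) (simp add: c[of a\<^sub>2 a\<^sub>3] \<alpha>\<^sub>1[of _ a\<^sub>3 a\<^sub>2] \<alpha>\<^sub>2[of _ a\<^sub>1 a\<^sub>3 a\<^sub>2])
  have swap\<^sub>3\<^sub>4: "ext_d c \<alpha> [a\<^sub>1, a\<^sub>2, a\<^sub>4, a\<^sub>3, a\<^sub>5] = - ext_d c \<alpha> [a\<^sub>1, a\<^sub>2, a\<^sub>3, a\<^sub>4, a\<^sub>5]"
    for a\<^sub>1 a\<^sub>2 a\<^sub>3 a\<^sub>4 a\<^sub>5
    unfolding ext_d_5 sum_negf[symmetric]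
    by (rule sum.cong[OF refl]) (simp add: c[of a\<^sub>3 a\<^sub>4] \<alpha>\<^sub>1[of _ a\<^sub>4 a\<^sub>3] \<alpha>\<^sub>2[of _ _ a\<^sub>4 a\<^sub>3])
  have swap\<^sub>4\<^sub>5: "ext_d c \<alpha> [a\<^sub>1, a\<^sub>2, a\<^sub>3, a\<^sub>5, a\<^sub>4] = - ext_d c \<alpha> [a\<^sub>1, a\<^sub>2, a\<^sub>3, a\<^sub>4, a\<^sub>5]"
    for a\<^sub>1 a\<^sub>2 a\<^sub>3 a\<^sub>4 a\<^sub>5
    unfolding ext_d_5 sum_negf[symmetric]
    by (rule sum.cong[OF refl]) (simp add: c[of a\<^sub>4 a\<^sub>5] \<alpha>\<^sub>2[of _ _ a\<^sub>5 a\<^sub>4])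
  show ?thesis
    unfolding alternating_def
  proof (intro allI impI)
    fix xs ys :: "nat list" and a b :: nat
    assume "length xs + length ys + 2 = 5"
    then consider (0) p q r where "xs = []" "ys = [p, q, r]"
      | (1) p q r where "xs = [p]" "ys = [q, r]"
      | (2) p q r where "xs = [p, q]" "ys = [r]"
      | (3) p q r where "xs = [p, q, r]" "ys = []"
      by (cases xs; cases ys) (auto simp: length_Suc_conv numeral_eq_Suc add_is_1)
    then show "ext_d c \<alpha> (xs @ a # b # ys) = - ext_d c \<alpha> (xs @ b # a # ys)"
    proof cases
      case 0 then show ?thesis using swap\<^sub>1\<^sub>2[of b a] by simp
    next
      case 1 then show ?thesis using swap\<^sub>2\<^sub>3[of p b a] by simp
    next
      case 2 then show ?thesis using swap\<^sub>3\<^sub>4[of p q b a] by simp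
    next
      case 3 then show ?thesis using swap\<^sub>4\<^sub>5[of p q r b a] by simp
    qed
  qed
qed


lemma all_sorted_lists_Suc:
  fixes P :: "nat list \<Rightarrow> bool"
  shows "(\<forall>l. set l \<subseteq> {m..n} \<and> length l = Suc k \<and> sorted_wrt (<) l \<longrightarrow> P l) \<longleftrightarrow>
         (\<forall>a\<in>{m..n}. \<forall>l. set l \<subseteq> {Suc a..n} \<and> length l = k \<and> sorted_wrt (<) l \<longrightarrow> P (a # l))"
    (is "?all \<longleftrightarrow> ?Cons")
proof -
  have Cons: "set (a # l) \<subseteq> {m..n} \<and> length (a # l) = Suc k \<and> sorted_wrt (<) (a # l) \<longleftrightarrow>
        a \<in> {m..n} \<and> set l \<subseteq> {Suc a..n} \<and> length l = k \<and> sorted_wrt (<) l" for a l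
    by (auto simp: subset_iff Suc_le_eq)
  show ?thesis
  proof
    assume ?all
    then show ?Cons
      using Cons by blast
  next
    assume ?Cons
    show ?all
    proof (intro allI impI)
      fix l assume l: "set l \<subseteq> {m..n} \<and> length l = Suc k \<and> sorted_wrt (<) l"
      then obtain a l' where "l = a # l'"
        by (cases l) auto
      with l Cons \<open>?Cons\<close> show "P l" by blast
    qed
  qed
qed

text \<open>The if-then-else (rather than a disjunction) keeps the simplifier from unfolding the
remaining range before the emptiness test is decided.\<close>

lemma Ball_atLeastAtMost_nat_unfold:
  "(\<forall>a\<in>{m..n::nat}. Q a) \<longleftrightarrow> (if n < m then True else Q m \<and> (\<forall>a\<in>{Suc m..n}. Q a))"
  by (auto simp: Icc_eq_insert_lb_nat)

lemma all_sorted_lists_5_in_1_7: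
  fixes P :: "nat list \<Rightarrow> bool"
  shows "(\<forall>l. set l \<subseteq> {1..7} \<and> length l = 5 \<and> sorted_wrt (<) l \<longrightarrow> P l) \<longleftrightarrow>
   P [1, 2, 3, 4, 5] \<and> P [1, 2, 3, 4, 6] \<and> P [1, 2, 3, 4, 7] \<and> P [1, 2, 3, 5, 6] \<and>
   P [1, 2, 3, 5, 7] \<and> P [1, 2, 3, 6, 7] \<and> P [1, 2, 4, 5, 6] \<and> P [1, 2, 4, 5, 7] \<and>
   P [1, 2, 4, 6, 7] \<and> P [1, 2, 5, 6, 7] \<and> P [1, 3, 4, 5, 6] \<and> P [1, 3, 4, 5, 7] \<and>
   P [1, 3, 4, 6, 7] \<and> P [1, 3, 5, 6, 7] \<and> P [1, 4, 5, 6, 7] \<and> P [2, 3, 4, 5, 6] \<and>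
   P [2, 3, 4, 5, 7] \<and> P [2, 3, 4, 6, 7] \<and> P [2, 3, 5, 6, 7] \<and> P [2, 4, 5, 6, 7] \<and>
   P [3, 4, 5, 6, 7]"
  by (simp add: numeral_eq_Suc all_sorted_lists_Suc Ball_atLeastAtMost_nat_unfold)

lemma all_sorted_lists_2_in_3_6:
  fixes P :: "nat list \<Rightarrow> bool"
  shows "(\<forall>l. set l \<subseteq> {3..6} \<and> length l = 2 \<and> sorted_wrt (<) l \<longrightarrow> P l) \<longleftrightarrow>
   P [3, 4] \<and> P [3, 5] \<and> P [3, 6] \<and> P [4, 5] \<and> P [4, 6] \<and> P [5, 6]"
  by (simp add: numeral_eq_Suc all_sorted_lists_Suc Ball_atLeastAtMost_nat_unfold)

lemma all_lists_length_2:
  "(\<forall>l. set l \<subseteq> S \<and> length l = 2 \<longrightarrow> P l) \<longleftrightarrow> (\<forall>a\<in>S. \<forall>b\<in>S. P [a, b])"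
  by (auto simp: length_Suc_conv numeral_2_eq_2)

lemma atLeastAtMost_1_7: "{1..7::nat} = {1, 2, 3, 4, 5, 6, 7}"
  and atLeastAtMost_3_6: "{3..6::nat} = {3, 4, 5, 6}"
  by auto

lemma ext_d_hodge_phi_12ab7:
  assumes "(a, b) \<in> {(3, 4), (3, 5), (3, 6), (4, 5), (4, 6), (5, 6)}"
  shows "ext_d (g_bracket x y z w A B C) (hodge phi) [1, 2, a, b, 7] =
    theta A omega7 [a, b] + theta B omega1 [a, b] + theta C omega2 [a, b] - (x + w) * omega7 [a, b]"
  using assms unfolding ext_d_5 atLeastAtMost_1_7
  by (elim insertE emptyE; simp add: hodge_phi levi_civita_altdef g_bracket_def half_br_def
      theta_2 atLeastAtMost_3_6 omega7_def omega1_def omega2_def eform_def set_eq_subset)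

lemma ext_d_hodge_phi_trace:
  "ext_d (g_bracket x y z w A B C) (hodge phi) [1, 3, 4, 5, 6] = - mtrace B"
  "ext_d (g_bracket x y z w A B C) (hodge phi) [2, 3, 4, 5, 6] = - mtrace C"
  "ext_d (g_bracket x y z w A B C) (hodge phi) [3, 4, 5, 6, 7] = - mtrace A"
  unfolding ext_d_5 atLeastAtMost_1_7
  by (simp_all add: hodge_phi levi_civita_altdef g_bracket_def half_br_def mtrace_def
      atLeastAtMost_3_6)

lemma ext_d_hodge_phi_vanishing:
  assumes "J \<in> {[1, 2, 3, 4, 5], [1, 2, 3, 4, 6], [1, 2, 3, 5, 6], [1, 2, 4, 5, 6],
                 [1, 3, 4, 5, 7], [1, 3, 4, 6, 7], [1, 3, 5, 6, 7], [1, 4, 5, 6, 7],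
                 [2, 3, 4, 5, 7], [2, 3, 4, 6, 7], [2, 3, 5, 6, 7], [2, 4, 5, 6, 7]}"
  shows "ext_d (g_bracket x y z w A B C) (hodge phi) J = 0"
  using assms
  by (elim insertE emptyE; simp only: ext_d_5 atLeastAtMost_1_7;
      simp add: hodge_phi levi_civita_altdef g_bracket_def half_br_def)

theorem corollary2p6:
  fixes x y z w :: real and A B C :: "nat \<Rightarrow> nat \<Rightarrow> real"
  assumes trB: "mtrace B = 0" and trC: "mtrace C = 0"
    and AB: "\<forall>i\<in>{3..6}. \<forall>j\<in>{3..6}. mcomm A B i j = x * B i j + y * C i j"
    and AC: "\<forall>i\<in>{3..6}. \<forall>j\<in>{3..6}. mcomm A C i j = z * B i j + w * C i j"
    and BC: "\<forall>i\<in>{3..6}. \<forall>j\<in>{3..6}. mcomm B C i j = 0"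
  shows "(\<forall>J. set J \<subseteq> {1..7} \<and> length J = 5 \<longrightarrow>
            ext_d (g_bracket x y z w A B C) (hodge phi) J = 0)
         \<longleftrightarrow>
         (mtrace A = 0 \<and>
          (\<forall>a\<in>{3..6}. \<forall>b\<in>{3..6}.
             theta A omega7 [a, b] + theta B omega1 [a, b] + theta C omega2 [a, b]
               = (x + w) * omega7 [a, b]))"
proof -
  let ?d = "ext_d (g_bracket x y z w A B C) (hodge phi)"
  let ?\<Theta> = "\<lambda>l. theta A omega7 l + theta B omega1 l + theta C omega2 l - (x + w) * omega7 l"
  have alt: "alternating 5 ?d"
    by (rule alternating_ext_d_5) (simp_all add: g_bracket_def alternating_hodge)
  have "(\<forall>J. set J \<subseteq> {1..7} \<and> length J = 5 \<longrightarrow> ?d J = 0) \<longleftrightarrow>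
      ?\<Theta> [3, 4] = 0 \<and> ?\<Theta> [3, 5] = 0 \<and> ?\<Theta> [3, 6] = 0 \<and>
      ?\<Theta> [4, 5] = 0 \<and> ?\<Theta> [4, 6] = 0 \<and> ?\<Theta> [5, 6] = 0 \<and> mtrace A = 0"
    unfolding alternating_vanishes_iff_sorted[OF alt] all_sorted_lists_5_in_1_7
    using trB trC
    (* with One_nat_def the index lists would lose the numeral 1 that the component lemmas expect *)
    by (simp add: ext_d_hodge_phi_12ab7 ext_d_hodge_phi_trace ext_d_hodge_phi_vanishing
        del: One_nat_def)
  moreover have "(\<forall>a\<in>{3..6}. \<forall>b\<in>{3..6}. ?\<Theta> [a, b] = 0) \<longleftrightarrow>
      (\<forall>l. set l \<subseteq> {3..6} \<and> length l = 2 \<longrightarrow> ?\<Theta> l = 0)"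
    by (rule all_lists_length_2[symmetric])
  moreover have "\<dots> \<longleftrightarrow> ?\<Theta> [3, 4] = 0 \<and> ?\<Theta> [3, 5] = 0 \<and> ?\<Theta> [3, 6] = 0 \<and>
      ?\<Theta> [4, 5] = 0 \<and> ?\<Theta> [4, 6] = 0 \<and> ?\<Theta> [5, 6] = 0"
    unfolding alternating_vanishes_iff_sorted[OF alternating_theta_omega]
    by (rule all_sorted_lists_2_in_3_6)
  ultimately show ?thesis
    by auto
qed

end
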